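(* Let $U\in C^{2}([y_{1},y_{2}])$ and assume that for every $c\in(U_{\min},U_{\max})$ the set $\{y\in[y_1,y_2]: U(y)=c\}$ is finite, where $U_{\min}=\min U$, $U_{\max}=\max U$. Let $(c_s,\alpha_s,\beta,\phi_s)$ be a neutral mode with $\phi_s\in H^{2}(y_1,y_2)$, i.e. $c_s\in\mathbb{R}$, $\alpha_s>0$, $\beta\in\mathbb{R}$, and $\phi_s\in H^2(y_1,y_2)$ is a nontrivial function solving $$-\phi_s''+\alpha_s^{2}\phi_s-\frac{\beta-U''}{U-c_s}\phi_s=0\quad\text{on }(y_1,y_2)\setminus\{U=c_s\},\qquad \phi_s(y_1)=\phi_s(y_2)=0.$$ Then $c_s$ satisfies one of the following: (i) $c_s=U(z)$ for some $z\in[y_1,y_2]$ with $\beta=U''(z)$; (ii) $c_s=U(y_1)$ or $c_s=U(y_2)$; (iii) $c_s$ is a critical value of $U$; (iv) $c_s\notin \mathrm{Ran}(U)$.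
   Context: This concerns the Rayleigh–Kuo equation arising from linearizing the 2D incompressible Euler equation with Coriolis force (beta-plane, parameter $\beta$) around a shear flow $(U(y),0)$ in the channel $y\in[y_1,y_2]$. *)

theory Defs
  imports "HOL-Analysis.Analysis"
begin

definition C2_on :: "real \<Rightarrow> real \<Rightarrow> (real \<Rightarrow> real) \<Rightarrow> (real \<Rightarrow> real) \<Rightarrow> (real \<Rightarrow> real) \<Rightarrow> bool" where
  "C2_on a b U U' U'' \<longleftrightarrow>
     (\<forall>y\<in>{a..b}. (U has_real_derivative U' y) (at y within {a..b})) \<and>
     (\<forall>y\<in>{a..b}. (U' has_real_derivative U'' y) (at y within {a..b})) \<and>
     continuous_on {a..b} U''"

text \<open>Sobolev space H^2(a,b) in one dimension: phi is differentiable on [a,b]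
  with derivative phi', and phi' is absolutely continuous with weak derivative
  phi'' in L^2(a,b) (i.e. phi' is the indefinite integral of an L^2 function).\<close>
definition H2_on :: "real \<Rightarrow> real \<Rightarrow> (real \<Rightarrow> real) \<Rightarrow> (real \<Rightarrow> real) \<Rightarrow> (real \<Rightarrow> real) \<Rightarrow> bool" where
  "H2_on a b \<phi> \<phi>' \<phi>'' \<longleftrightarrow>
     (\<forall>y\<in>{a..b}. (\<phi> has_real_derivative \<phi>' y) (at y within {a..b})) \<and>
     \<phi>'' absolutely_integrable_on {a..b} \<and>
     (\<lambda>y. (\<phi>'' y)^2) integrable_on {a..b} \<and>
     (\<forall>y\<in>{a..b}. \<phi>' y = \<phi>' a + integral {a..y} \<phi>'')"

definition critical_value_on :: "real \<Rightarrow> real \<Rightarrow> (real \<Rightarrow> real) \<Rightarrow> (real \<Rightarrow> real) \<Rightarrow> real \<Rightarrow> bool" where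
  "critical_value_on a b U' U c \<longleftrightarrow> (\<exists>y\<in>{a..b}. U' y = 0 \<and> U y = c)"

end

theory Submission
  imports Defs
begin

text \<open>Suppose \<open>c\<close> is attained by \<open>U\<close>, differs from \<open>U y1\<close> and \<open>U y2\<close>, is not critical,
  and \<open>\<beta> \<noteq> U''\<close> on the level set \<open>{U = c}\<close>; we show \<open>\<phi> = 0\<close>. Then \<open>c\<close> lies strictly between
  the extreme values of \<open>U\<close>, so the level set is finite and consists of simple zeros of \<open>U - c\<close>.
  Near such a zero \<open>z\<close> the coefficient \<open>(\<beta> - U'') / (U - c)\<close> behaves like \<open>L / (y - z)\<close> with
  \<open>L \<noteq> 0\<close> unless \<open>\<phi> z = 0\<close>, and integrating the equation would make the bounded \<open>\<phi>'\<close> diverge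
  logarithmically; so \<open>\<phi>\<close> vanishes on the level set. On a gap \<open>(a, b)\<close> of the level set where
  \<open>\<beta> (U - c) \<le> 0\<close>, the flux \<open>\<phi> (\<phi>' - U' \<phi> / (U - c))\<close> has derivative at least \<open>\<alpha>\<^sup>2 \<phi>\<^sup>2\<close> and
  vanishes at both ends, which forces \<open>\<phi> = 0\<close> on \<open>(a, b)\<close>. Finally the coefficient is
  \<open>O(1 / \<bar>y - p\<bar>)\<close> near every point \<open>p\<close>, which still gives uniqueness for the Cauchy problem:
  the set where \<open>\<phi> = \<phi>' = 0\<close> is open and closed in \<open>[y1, y2]\<close>.\<close>

lemma integral_eq_AE:
  fixes f g :: "real \<Rightarrow> real"
  assumes "AE x in lborel. x \<in> S \<longrightarrow> f x = g x"
  shows "integral S f = integral S g"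
  using has_integral_AE[OF assms] by (simp add: integral_def integrable_on_def)

lemma integral_le_AE:
  fixes f g :: "real \<Rightarrow> real"
  assumes le: "AE x in lborel. x \<in> S \<longrightarrow> f x \<le> g x"
    and f: "f integrable_on S" and g: "g integrable_on S"
  shows "integral S f \<le> integral S g"
proof -
  have "AE x in lborel. x \<in> S \<longrightarrow> f x = min (f x) (g x)"
    using le by eventually_elim auto
  from has_integral_AE[OF this] have "((\<lambda>x. min (f x) (g x)) has_integral integral S f) S"
    using integrable_integral[OF f] by simp
  then show ?thesis
    by (rule has_integral_le[OF _ integrable_integral[OF g]]) simp
qed

lemma continuous_on_Icc_abs_bound:
  fixes f :: "real \<Rightarrow> real"
  assumes "continuous_on {a..b} f"
  shows "\<exists>B>0. \<forall>y\<in>{a..b}. \<bar>f y\<bar> \<le> B"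
proof -
  obtain B where "B \<ge> 0" "\<And>x. x \<in> {a..b} \<Longrightarrow> norm (f x) \<le> B"
    using continuous_on_compact_bound[OF compact_Icc assms] by blast
  then show ?thesis by (intro exI[of _ "B + 1"]) force
qed

lemma linear_growth_at_simple_zero:
  fixes f :: "real \<Rightarrow> real"
  assumes f': "(f has_real_derivative D) (at p within S)" and "D \<noteq> 0"
  shows "\<exists>m>0. \<exists>d>0. \<forall>t\<in>S. \<bar>t - p\<bar> < d \<longrightarrow> m * \<bar>t - p\<bar> \<le> \<bar>f t - f p\<bar>"
proof -
  define m where "m = \<bar>D\<bar> / 2"
  have m: "m > 0" using \<open>D \<noteq> 0\<close> by (simp add: m_def)
  have "((\<lambda>t. (f t - f p) / (t - p)) \<longlongrightarrow> D) (at p within S)"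
    using f' by (simp add: has_field_derivative_iff)
  then have "eventually (\<lambda>t. dist ((f t - f p) / (t - p)) D < m) (at p within S)"
    using m by (simp add: tendsto_iff)
  then obtain d where d: "d > 0"
    and near: "\<And>t. t \<in> S \<Longrightarrow> t \<noteq> p \<Longrightarrow> dist t p < d \<Longrightarrow> dist ((f t - f p) / (t - p)) D < m"
    unfolding eventually_at by blast
  have "m * \<bar>t - p\<bar> \<le> \<bar>f t - f p\<bar>" if t: "t \<in> S" "\<bar>t - p\<bar> < d" for t
  proof (cases "t = p")
    case False
    define q where "q = (f t - f p) / (t - p)"
    have "\<bar>q - D\<bar> < m" using near[OF t(1) False] t(2) by (simp add: q_def dist_real_def)
    then have "m \<le> \<bar>q\<bar>" by (simp add: m_def abs_if split: if_splits)
    moreover have "\<bar>f t - f p\<bar> = \<bar>q\<bar> * \<bar>t - p\<bar>" using False by (simp add: q_def)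
    ultimately show ?thesis by (simp add: mult_right_mono)
  qed simp
  with m d show ?thesis by blast
qed

lemma crossing_at_interior_simple_zero:
  fixes U :: "real \<Rightarrow> real"
  assumes U': "(U has_real_derivative D) (at z)" "D \<noteq> 0" and z: "y1 < z" "z < y2"
  shows "(\<exists>t\<in>{y1..y2}. U t < U z) \<and> (\<exists>t\<in>{y1..y2}. U z < U t)"
proof -
  have d: "0 < min (z - y1) (y2 - z)" using z by simp
  have near: "\<bar>z - y\<bar> < min (z - y1) (y2 - z) \<Longrightarrow> y \<in> {y1..y2}" for y by auto
  have "\<not> (\<forall>t\<in>{y1..y2}. U z \<le> U t)"
  proof
    assume "\<forall>t\<in>{y1..y2}. U z \<le> U t"
    then have "D = 0" using near by (intro DERIV_local_min[OF U'(1) d]) blast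
    then show False using U'(2) by simp
  qed
  moreover have "\<not> (\<forall>t\<in>{y1..y2}. U t \<le> U z)"
  proof
    assume "\<forall>t\<in>{y1..y2}. U t \<le> U z"
    then have "D = 0" using near by (intro DERIV_local_max[OF U'(1) d]) blast
    then show False using U'(2) by simp
  qed
  ultimately show ?thesis by (auto simp: not_le)
qed

lemma Inf_less_less_Sup_image:
  fixes U :: "real \<Rightarrow> real"
  assumes "continuous_on {a..b} U" "t0 \<in> {a..b}" "U t0 < c" "t1 \<in> {a..b}" "c < U t1"
  shows "Inf (U ` {a..b}) < c \<and> c < Sup (U ` {a..b})"
proof -
  have "bounded (U ` {a..b})"
    by (rule compact_imp_bounded[OF compact_continuous_image[OF assms(1) compact_Icc]])
  then have "Inf (U ` {a..b}) \<le> U t0" "U t1 \<le> Sup (U ` {a..b})"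
    using assms(2,4) by (auto intro: cInf_lower cSup_upper bounded_imp_bdd_below bounded_imp_bdd_above)
  then show ?thesis using assms(3,5) by linarith
qed

lemma continuous_nonvanishing_same_sign:
  fixes U :: "real \<Rightarrow> real"
  assumes "lo \<le> hi" "continuous_on {lo..hi} U" "\<forall>x\<in>{lo..hi}. U x \<noteq> c"
  shows "0 < (U lo - c) * (U hi - c)"
proof (rule ccontr)
  assume "\<not> ?thesis"
  then have "U lo \<le> c \<and> c \<le> U hi \<or> U hi \<le> c \<and> c \<le> U lo"
    by (auto simp: mult_le_0_iff not_less)
  then obtain x where "x \<in> {lo..hi}" "U x = c"
    using IVT'[of U lo c hi] IVT2'[of U hi c lo] assms(1,2) by auto
  then show False using assms(3) by blast
qed

lemma level_set_gap:
  fixes U :: "real \<Rightarrow> real"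
  assumes y12: "y1 < y2" and cU: "continuous_on {y1..y2} U"
    and fin: "finite {y \<in> {y1..y2}. U y = c}" and t: "t \<in> {y1..y2}" "U t \<noteq> c"
  shows "\<exists>a b. y1 \<le> a \<and> a < b \<and> b \<le> y2 \<and> (a = y1 \<or> U a = c) \<and> (b = y2 \<or> U b = c)
           \<and> (\<forall>s\<in>{a<..<b}. 0 < (U s - c) * (U t - c))"
proof -
  define Z where "Z = {y \<in> {y1..y2}. U y = c}"
  define a where "a = Max (insert y1 {z \<in> Z. z < t})"
  define b where "b = Min (insert y2 {z \<in> Z. t < z})"
  have fA: "finite (insert y1 {z \<in> Z. z < t})" and fB: "finite (insert y2 {z \<in> Z. t < z})"
    using fin by (auto simp: Z_def intro: rev_finite_subset)
  have a: "a = y1 \<or> a \<in> Z \<and> a < t" "y1 \<le> a"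
    using Max_in[OF fA] Max_ge[OF fA] by (auto simp: a_def)
  have b: "b = y2 \<or> b \<in> Z \<and> t < b" "b \<le> y2"
    using Min_in[OF fB] Min_le[OF fB] by (auto simp: b_def)
  have atb: "a \<le> t" "t \<le> b" using a b t by auto
  have ab: "a < b" using a b atb t y12 by (auto simp: Z_def)
  have noZ: "U s \<noteq> c" if s: "s \<in> {a<..<b}" for s
  proof
    assume "U s = c"
    then have "s \<in> Z" using s a b by (auto simp: Z_def)
    then have "s \<noteq> t" "s < t \<longrightarrow> s \<le> a" "t < s \<longrightarrow> b \<le> s"
      using Max_ge[OF fA, of s] Min_le[OF fB, of s] t(2) \<open>U s = c\<close> by (auto simp: a_def b_def)
    then show False using s by auto
  qed
  have "0 < (U s - c) * (U t - c)" if s: "s \<in> {a<..<b}" for s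
  proof -
    have sub: "{min s t..max s t} \<subseteq> {y1..y2}" using s atb a b by auto
    have "\<forall>x\<in>{min s t..max s t}. U x \<noteq> c"
    proof
      fix x assume x: "x \<in> {min s t..max s t}"
      show "U x \<noteq> c"
      proof (cases "x = t")
        case False
        then have "x \<in> {a<..<b}" using x s atb by (auto simp: min_def max_def split: if_splits)
        then show ?thesis by (rule noZ)
      qed (use t(2) in simp)
    qed
    from continuous_nonvanishing_same_sign[OF _ continuous_on_subset[OF cU sub] this]
    show ?thesis by (cases "s \<le> t") (auto simp: min_def max_def mult.commute)
  qed
  then show ?thesis using a b ab unfolding Z_def by blast
qed

lemma nonneg_derivative_vanishes_between_zero_limits:
  fixes f :: "real \<Rightarrow> real"
  assumes deriv: "\<And>t. t \<in> {a<..<b} \<Longrightarrow> (f has_real_derivative f' t) (at t)"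
    and nonneg: "\<And>t. t \<in> {a<..<b} \<Longrightarrow> 0 \<le> f' t"
    and lim: "(f \<longlongrightarrow> 0) (at a within {a<..<b})" "(f \<longlongrightarrow> 0) (at b within {a<..<b})"
    and t: "t \<in> {a<..<b}"
  shows "f' t = 0"
proof -
  have mono: "f s \<le> f u" if su: "s \<in> {a<..<b}" "u \<in> {a<..<b}" "s \<le> u" for s u
  proof (rule DERIV_nonneg_imp_increasing_open[OF su(3)])
    fix x assume "s < x" "x < u"
    then show "\<exists>y. (f has_real_derivative y) (at x) \<and> 0 \<le> y"
      using deriv nonneg su by (meson greaterThanLessThan_iff order.strict_trans)
  next
    have "isCont f x" if "x \<in> {s..u}" for x
      using deriv[THEN DERIV_isCont, of x] that su by auto
    then show "continuous_on {s..u} f" by (intro continuous_at_imp_continuous_on) blast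
  qed
  have "f u = 0" if u: "u \<in> {a<..<b}" for u
  proof -
    have "0 \<le> f u"
    proof (rule tendsto_upperbound)
      show "(f \<longlongrightarrow> 0) (at a within {a<..<u})"
        using u by (intro tendsto_within_subset[OF lim(1)]) auto
      show "eventually (\<lambda>s. f s \<le> f u) (at a within {a<..<u})"
        unfolding eventually_at using mono u by (intro exI[of _ 1]) auto
    qed (use u in \<open>simp add: at_within_eq_bot_iff\<close>)
    moreover have "f u \<le> 0"
    proof (rule tendsto_lowerbound)
      show "(f \<longlongrightarrow> 0) (at b within {u<..<b})"
        using u by (intro tendsto_within_subset[OF lim(2)]) auto
      show "eventually (\<lambda>s. f u \<le> f s) (at b within {u<..<b})"
        unfolding eventually_at using mono u by (intro exI[of _ 1]) auto
    qed (use u in \<open>simp add: at_within_eq_bot_iff\<close>)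
    ultimately show ?thesis by simp
  qed
  then have "(f has_real_derivative 0) (at t)"
    by (intro has_field_derivative_transform_within_open[OF DERIV_const _ t]) auto
  then show ?thesis using deriv[OF t] DERIV_unique by blast
qed

locale H2_function =
  fixes y1 y2 :: real and \<phi> \<phi>' \<phi>'' :: "real \<Rightarrow> real"
  assumes H2: "H2_on y1 y2 \<phi> \<phi>' \<phi>''"
begin

lemma phi_deriv: "y \<in> {y1..y2} \<Longrightarrow> (\<phi> has_real_derivative \<phi>' y) (at y within {y1..y2})"
  using H2 unfolding H2_on_def by blast

lemma continuous_phi: "continuous_on {y1..y2} \<phi>"
  by (rule DERIV_continuous_on, erule phi_deriv)

lemma phi''_integrable_on: "{p..q} \<subseteq> {y1..y2} \<Longrightarrow> \<phi>'' integrable_on {p..q}"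
  using H2 integrable_on_subinterval unfolding H2_on_def absolutely_integrable_on_def by blast

lemma phi'_diff:
  assumes "y1 \<le> p" "p \<le> x" "x \<le> y2"
  shows "\<phi>' x - \<phi>' p = integral {p..x} \<phi>''"
proof -
  have rep: "\<And>y. y \<in> {y1..y2} \<Longrightarrow> \<phi>' y = \<phi>' y1 + integral {y1..y} \<phi>''"
    using H2 unfolding H2_on_def by blast
  have "integral {y1..p} \<phi>'' + integral {p..x} \<phi>'' = integral {y1..x} \<phi>''"
    using assms by (intro Henstock_Kurzweil_Integration.integral_combine phi''_integrable_on) auto
  then show ?thesis using rep[of p] rep[of x] assms by auto
qed

lemma continuous_phi': "continuous_on {y1..y2} \<phi>'"
proof -
  have "continuous_on {y1..y2} (\<lambda>y. \<phi>' y1 + integral {y1..y} \<phi>'')"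
    by (intro continuous_intros indefinite_integral_continuous_1 phi''_integrable_on) simp
  then show ?thesis by (rule continuous_on_eq) (use phi'_diff in fastforce)
qed

lemma phi_lipschitz:
  assumes "{u..v} \<subseteq> {y1..y2}" "\<forall>x\<in>{u..v}. \<bar>\<phi>' x\<bar> \<le> B" "x \<in> {u..v}" "y \<in> {u..v}"
  shows "\<bar>\<phi> x - \<phi> y\<bar> \<le> B * \<bar>x - y\<bar>"
proof -
  have "norm (\<phi> x - \<phi> y) \<le> B * norm (x - y)"
  proof (rule field_differentiable_bound[of "{u..v}" \<phi> \<phi>'])
    show "(\<phi> has_field_derivative \<phi>' z) (at z within {u..v})" if "z \<in> {u..v}" for z
      using phi_deriv[of z] that assms(1) by (auto intro: has_field_derivative_subset)
  qed (use assms in \<open>auto simp: convex_real_interval\<close>)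
  then show ?thesis by simp
qed

lemma phi'_lipschitz_AE:
  assumes "y1 \<le> u" "u \<le> v" "v \<le> y2" "AE t in lborel. t \<in> {u..v} \<longrightarrow> \<bar>\<phi>'' t\<bar> \<le> M"
  shows "\<bar>\<phi>' v - \<phi>' u\<bar> \<le> M * (v - u)"
proof -
  have int: "\<phi>'' integrable_on {u..v}" using assms by (intro phi''_integrable_on) auto
  have "integral {u..v} \<phi>'' \<le> integral {u..v} (\<lambda>t. M)"
    using assms(4) by (intro integral_le_AE int) (auto elim: eventually_mono)
  moreover have "integral {u..v} (\<lambda>t. - M) \<le> integral {u..v} \<phi>''"
    using assms(4) by (intro integral_le_AE int) (auto elim: eventually_mono)
  ultimately show ?thesis using phi'_diff[of u v] assms by (simp add: abs_le_iff mult.commute)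
qed

lemma phi'_zero_where_phi_vanishes:
  assumes "y1 \<le> a" "b \<le> y2" "t \<in> {a<..<b}" "\<forall>s\<in>{a<..<b}. \<phi> s = 0"
  shows "\<phi>' t = 0"
proof -
  have "(\<phi> has_real_derivative \<phi>' t) (at t)"
    using phi_deriv[of t] assms by (simp add: at_within_Icc_at)
  moreover have "(\<phi> has_real_derivative 0) (at t)"
    by (rule has_field_derivative_transform_within_open[OF DERIV_const _ assms(3)]) (use assms in auto)
  ultimately show ?thesis by (rule DERIV_unique)
qed

lemma double_zero_on_short_interval:
  assumes J: "y1 \<le> lo" "hi \<le> y2" "p \<in> {lo..hi}" and p: "\<phi> p = 0" "\<phi>' p = 0" and "0 \<le> C"
    and short: "\<forall>t\<in>{lo..hi}. C * \<bar>t - p\<bar> \<le> 1/2"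
    and sing: "AE t in lborel. t \<in> {lo..hi} \<and> t \<noteq> p \<longrightarrow> \<bar>\<phi>'' t\<bar> \<le> C * \<bar>\<phi> t\<bar> / \<bar>t - p\<bar>"
  shows "\<forall>x\<in>{lo..hi}. \<phi> x = 0 \<and> \<phi>' x = 0"
proof -
  have sub: "{lo..hi} \<subseteq> {y1..y2}" using J by auto
  have cont: "continuous_on {lo..hi} (\<lambda>y. \<bar>\<phi>' y\<bar>)"
    using continuous_on_subset[OF continuous_phi' sub] by (intro continuous_intros)
  then obtain x0 where max: "\<And>y. y \<in> {lo..hi} \<Longrightarrow> \<bar>\<phi>' y\<bar> \<le> \<bar>\<phi>' x0\<bar>" and "x0 \<in> {lo..hi}"
    using continuous_attains_sup[OF compact_Icc _ cont] J(3) by blast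
  define S where "S = \<bar>\<phi>' x0\<bar>"
  have phi_le: "\<bar>\<phi> t\<bar> \<le> S * \<bar>t - p\<bar>" if "t \<in> {lo..hi}" for t
    using phi_lipschitz[OF sub _ that J(3)] max p(1) by (simp add: S_def)
  have bound: "AE t in lborel. t \<in> {u..v} \<longrightarrow> \<bar>\<phi>'' t\<bar> \<le> C * S"
    if "u \<in> {lo..hi}" "v \<in> {lo..hi}" for u v
    using sing AE_lborel_singleton[of p]
  proof eventually_elim
    case (elim t)
    show ?case
    proof
      assume "t \<in> {u..v}"
      then have t: "t \<in> {lo..hi}" using that by auto
      show "\<bar>\<phi>'' t\<bar> \<le> C * S"
      proof (cases "t = p")
        case False
        then have "\<bar>\<phi>'' t\<bar> \<le> C * \<bar>\<phi> t\<bar> / \<bar>t - p\<bar>" using elim t by blast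
        also have "\<dots> \<le> C * (S * \<bar>t - p\<bar>) / \<bar>t - p\<bar>"
          using phi_le[OF t] \<open>0 \<le> C\<close> by (intro divide_right_mono mult_left_mono) auto
        finally show ?thesis using False by simp
      qed (use elim in simp)
    qed
  qed
  have phi'_le: "\<bar>\<phi>' x\<bar> \<le> S * (1 / 2)" if x: "x \<in> {lo..hi}" for x
  proof -
    have "\<bar>\<phi>' x - \<phi>' p\<bar> \<le> C * S * \<bar>x - p\<bar>"
      using phi'_lipschitz_AE[OF _ _ _ bound[OF J(3) x]] phi'_lipschitz_AE[OF _ _ _ bound[OF x J(3)]]
        x J by (cases "p \<le> x") (auto simp: abs_minus_commute)
    also have "\<dots> = S * (C * \<bar>x - p\<bar>)" by simp
    also have "\<dots> \<le> S * (1 / 2)" using short x by (intro mult_left_mono) (auto simp: S_def)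
    finally show ?thesis using p(2) by simp
  qed
  have "S = 0" using phi'_le[OF \<open>x0 \<in> {lo..hi}\<close>] by (simp add: S_def)
  then show ?thesis using phi_le max by (force simp: S_def)
qed

lemma vanishes_near_double_zero:
  assumes p: "p \<in> {y1..y2}" "\<phi> p = 0" "\<phi>' p = 0" and "C > 0" "r > 0"
    and sing: "AE t in lborel. t \<in> {y1..y2} \<and> \<bar>t - p\<bar> \<le> r \<and> t \<noteq> p \<longrightarrow>
                 \<bar>\<phi>'' t\<bar> \<le> C * \<bar>\<phi> t\<bar> / \<bar>t - p\<bar>"
  shows "\<exists>e>0. \<forall>x\<in>{y1..y2}. \<bar>x - p\<bar> < e \<longrightarrow> \<phi> x = 0 \<and> \<phi>' x = 0"
proof -
  define \<rho> where "\<rho> = min r (1 / (2 * C))"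
  have \<rho>: "\<rho> > 0" "\<rho> \<le> r" "C * \<rho> \<le> 1/2"
    using \<open>C > 0\<close> \<open>r > 0\<close> by (auto simp: \<rho>_def min_def field_simps)
  define lo where "lo = max (p - \<rho>) y1"
  define hi where "hi = min (p + \<rho>) y2"
  have J: "y1 \<le> lo" "hi \<le> y2" "p \<in> {lo..hi}" and near: "\<And>t. t \<in> {lo..hi} \<Longrightarrow> \<bar>t - p\<bar> \<le> \<rho>"
    using p \<rho>(1) by (auto simp: lo_def hi_def abs_le_iff)
  have "\<forall>t\<in>{lo..hi}. C * \<bar>t - p\<bar> \<le> 1/2"
    using near \<rho>(3) \<open>C > 0\<close> by (meson order_trans mult_left_mono less_imp_le)
  moreover have "AE t in lborel. t \<in> {lo..hi} \<and> t \<noteq> p \<longrightarrow> \<bar>\<phi>'' t\<bar> \<le> C * \<bar>\<phi> t\<bar> / \<bar>t - p\<bar>"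
    using sing by eventually_elim (use J near \<rho>(2) in \<open>fastforce\<close>)
  ultimately have "\<forall>x\<in>{lo..hi}. \<phi> x = 0 \<and> \<phi>' x = 0"
    by (rule double_zero_on_short_interval[OF J p(2,3) less_imp_le[OF \<open>C > 0\<close>]])
  moreover have "x \<in> {lo..hi}" if "x \<in> {y1..y2}" "\<bar>x - p\<bar> < \<rho>" for x
    using that by (auto simp: lo_def hi_def)
  ultimately show ?thesis using \<rho>(1) by blast
qed

lemma no_reciprocal_singularity:
  assumes z: "y1 \<le> z" "z < w" "w \<le> y2" and "K > 0"
    and sing: "AE t in lborel. t \<in> {z<..w} \<longrightarrow> s * \<phi>'' t \<le> A - K / (t - z)"
  shows False
proof -
  obtain B where B: "\<And>t. t \<in> {y1..y2} \<Longrightarrow> \<bar>\<phi>' t\<bar> \<le> B"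
    using continuous_on_Icc_abs_bound[OF continuous_phi'] by blast
  define T where "T = (\<bar>A\<bar> * (w - z) + 2 * \<bar>s\<bar> * B + 1) / K"
  define y where "y = z + (w - z) * exp (- T)"
  have "0 \<le> B" using B[of w] z by auto
  then have "T > 0" using \<open>K > 0\<close> z by (simp add: T_def add_nonneg_pos)
  then have "(w - z) * exp (- T) \<le> w - z" using mult_left_mono[of "exp (- T)" 1 "w - z"] z by simp
  moreover have "0 < (w - z) * exp (- T)" using z by simp
  ultimately have y: "z < y" "y \<le> w" unfolding y_def by linarith+
  have "ln (y - z) = ln (w - z) - T" using z by (simp add: y_def ln_mult)
  have FTC: "((\<lambda>t. A - K / (t - z)) has_integral
      (A * w - K * ln (w - z)) - (A * y - K * ln (y - z))) {y..w}"
  proof (rule fundamental_theorem_of_calculus[OF y(2)])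
    fix t assume "t \<in> {y..w}"
    then have "t - z > 0" using y by auto
    then have "((\<lambda>t. A * t - K * ln (t - z)) has_real_derivative A - K / (t - z)) (at t within {y..w})"
      by (auto intro!: derivative_eq_intros)
    then show "((\<lambda>t. A * t - K * ln (t - z)) has_vector_derivative A - K / (t - z)) (at t within {y..w})"
      by (simp add: has_real_derivative_iff_has_vector_derivative)
  qed
  have int: "(\<lambda>t. s * \<phi>'' t) integrable_on {y..w}"
    using integrable_on_cmult_left[OF phi''_integrable_on, of y w s] y z by simp
  have "s * (\<phi>' w - \<phi>' y) = integral {y..w} (\<lambda>t. s * \<phi>'' t)"
    using phi'_diff[of y w] y z by simp
  also have "\<dots> \<le> integral {y..w} (\<lambda>t. A - K / (t - z))"
    using sing y z by (intro integral_le_AE int has_integral_integrable[OF FTC])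
      (auto elim!: eventually_mono)
  also have "\<dots> = A * (w - y) - K * T"
    using integral_unique[OF FTC] \<open>ln (y - z) = ln (w - z) - T\<close> by (simp add: algebra_simps)
  also have "\<dots> \<le> \<bar>A\<bar> * (w - z) - K * T"
    using mult_right_mono[OF abs_ge_self, of "w - y" A] mult_left_mono[of "w - y" "w - z" "\<bar>A\<bar>"] y
    by simp
  finally have "s * (\<phi>' w - \<phi>' y) \<le> - 2 * \<bar>s\<bar> * B - 1"
    using \<open>K > 0\<close> by (simp add: T_def)
  moreover have "\<bar>\<phi>' w - \<phi>' y\<bar> \<le> 2 * B" using B[of w] B[of y] y z by simp
  then have "\<bar>s * (\<phi>' w - \<phi>' y)\<bar> \<le> \<bar>s\<bar> * (2 * B)" by (simp add: abs_mult mult_left_mono)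
  ultimately show False by linarith
qed

end

lemma flux_derivative_identity:
  fixes D p p1 u1 u2 a2 \<beta> :: real
  assumes "D \<noteq> 0"
  shows "p1 * (p1 - u1 * p / D) + p * ((a2 * p - (\<beta> - u2) / D * p) - ((u2 * p + u1 * p1) * D - u1 * p * u1) / (D * D))
       = (p1 - u1 * p / D)^2 + a2 * p^2 - \<beta> * p^2 / D"
proof -
  have e1: "(\<beta> - u2) / D * p = \<beta> * p / D - u2 * p / D" by (simp add: diff_divide_distrib left_diff_distrib)
  have e2: "((u2 * p + u1 * p1) * D - u1 * p * u1) / (D * D) = u2 * p / D + u1 * p1 / D - u1 * u1 * p / (D * D)"
    using assms by (simp add: diff_divide_distrib add_divide_distrib)
  have e3: "(p1 - u1 * p / D)^2 = p1 * p1 - 2 * (u1 * p * p1 / D) + u1 * u1 * p * p / (D * D)"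
    by (simp add: power2_eq_square algebra_simps)
  show ?thesis unfolding e1 e2 e3 by (simp add: algebra_simps power2_eq_square)
qed

locale neutral_mode = H2_function y1 y2 \<phi> \<phi>' \<phi>''
  for y1 y2 :: real and \<phi> \<phi>' \<phi>'' :: "real \<Rightarrow> real" +
  fixes U U' U'' :: "real \<Rightarrow> real" and c \<alpha> \<beta> :: real
  assumes U_C2: "C2_on y1 y2 U U' U''"
    and phi_eq: "AE y in lborel. y \<in> {y1<..<y2} \<and> U y \<noteq> c \<longrightarrow>
                   - \<phi>'' y + \<alpha>^2 * \<phi> y - (\<beta> - U'' y) / (U y - c) * \<phi> y = 0"
begin

lemma U_deriv: "y \<in> {y1..y2} \<Longrightarrow> (U has_real_derivative U' y) (at y within {y1..y2})"
  using U_C2 by (auto simp: C2_on_def)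

lemma U'_deriv: "y \<in> {y1..y2} \<Longrightarrow> (U' has_real_derivative U'' y) (at y within {y1..y2})"
  using U_C2 by (auto simp: C2_on_def)

lemma continuous_U: "continuous_on {y1..y2} U"
  by (rule DERIV_continuous_on, erule U_deriv)

lemma continuous_U': "continuous_on {y1..y2} U'"
  by (rule DERIV_continuous_on, erule U'_deriv)

lemma continuous_U'': "continuous_on {y1..y2} U''"
  using U_C2 by (auto simp: C2_on_def)

lemma phi''_eq:
  "AE t in lborel. t \<in> {y1<..<y2} \<and> U t \<noteq> c \<longrightarrow>
     \<phi>'' t = \<alpha>^2 * \<phi> t - (\<beta> - U'' t) / (U t - c) * \<phi> t"
  using phi_eq by eventually_elim linarith

lemma level_distance_bound:
  assumes p: "p \<in> {y1..y2}" and simple: "U p = c \<Longrightarrow> U' p \<noteq> 0"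
  shows "\<exists>m>0. \<exists>r>0. \<forall>t\<in>{y1..y2}. \<bar>t - p\<bar> \<le> r \<longrightarrow> m * \<bar>t - p\<bar> \<le> \<bar>U t - c\<bar>"
proof (cases "U p = c")
  case True
  then obtain m d where "m > 0" "d > 0"
    and "\<forall>t\<in>{y1..y2}. \<bar>t - p\<bar> < d \<longrightarrow> m * \<bar>t - p\<bar> \<le> \<bar>U t - c\<bar>"
    using linear_growth_at_simple_zero[OF U_deriv[OF p] simple] by auto
  then show ?thesis by (intro exI[of _ m] conjI exI[of _ "d / 2"]) auto
next
  case False
  define e where "e = \<bar>U p - c\<bar> / 2"
  have "e > 0" using False by (simp add: e_def)
  then obtain d where "d > 0" and d: "\<And>t. t \<in> {y1..y2} \<Longrightarrow> dist t p < d \<Longrightarrow> dist (U t) (U p) < e"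
    using continuous_U p unfolding continuous_on_iff by blast
  have "(e / (d / 2)) * \<bar>t - p\<bar> \<le> \<bar>U t - c\<bar>" if "t \<in> {y1..y2}" "\<bar>t - p\<bar> \<le> d / 2" for t
  proof -
    have "(e / (d / 2)) * \<bar>t - p\<bar> \<le> (e / (d / 2)) * (d / 2)"
      using that \<open>e > 0\<close> \<open>d > 0\<close> by (intro mult_left_mono) auto
    also have "\<dots> \<le> \<bar>U t - c\<bar>"
      using d[OF that(1)] that(2) \<open>d > 0\<close> abs_triangle_ineq[of "U p - U t" "U t - c"]
      by (simp add: dist_real_def e_def abs_minus_commute)
    finally show ?thesis .
  qed
  then show ?thesis using \<open>e > 0\<close> \<open>d > 0\<close> by (intro exI[of _ "e / (d / 2)"] conjI exI[of _ "d / 2"]) auto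
qed

lemma phi''_bound_near:
  assumes fin: "finite {y \<in> {y1..y2}. U y = c}"
    and p: "p \<in> {y1..y2}" and simple: "U p = c \<Longrightarrow> U' p \<noteq> 0"
  shows "\<exists>C>0. \<exists>r>0. AE t in lborel. t \<in> {y1..y2} \<and> \<bar>t - p\<bar> \<le> r \<and> t \<noteq> p \<longrightarrow>
           \<bar>\<phi>'' t\<bar> \<le> C * \<bar>\<phi> t\<bar> / \<bar>t - p\<bar>"
proof -
  obtain m r where "m > 0" "r > 0" and m: "\<And>t. t \<in> {y1..y2} \<Longrightarrow> \<bar>t - p\<bar> \<le> r \<Longrightarrow> m * \<bar>t - p\<bar> \<le> \<bar>U t - c\<bar>"
    using level_distance_bound[OF p simple] by blast
  have "continuous_on {y1..y2} (\<lambda>t. \<beta> - U'' t)"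
    using continuous_U'' by (intro continuous_intros)
  then obtain M where "M > 0" and M: "\<And>t. t \<in> {y1..y2} \<Longrightarrow> \<bar>\<beta> - U'' t\<bar> \<le> M"
    using continuous_on_Icc_abs_bound by blast
  define C where "C = \<alpha>^2 * r + M / m"
  have "AE t in lborel. t \<notin> {y \<in> {y1..y2}. U y = c}"
    by (rule AE_not_in[OF finite_imp_null_set_lborel[OF fin]])
  then have "AE t in lborel. t \<in> {y1..y2} \<and> \<bar>t - p\<bar> \<le> r \<and> t \<noteq> p \<longrightarrow> \<bar>\<phi>'' t\<bar> \<le> C * \<bar>\<phi> t\<bar> / \<bar>t - p\<bar>"
    using phi''_eq AE_lborel_singleton[of y1] AE_lborel_singleton[of y2]
  proof eventually_elim
    case (elim t)
    show ?case
    proof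
      assume t: "t \<in> {y1..y2} \<and> \<bar>t - p\<bar> \<le> r \<and> t \<noteq> p"
      define D where "D = \<bar>t - p\<bar>"
      have D: "0 < D" "D \<le> r" using t by (auto simp: D_def)
      have "U t \<noteq> c" "t \<in> {y1<..<y2}" using t elim by auto
      then have "\<bar>\<phi>'' t\<bar> \<le> \<alpha>^2 * \<bar>\<phi> t\<bar> + \<bar>\<beta> - U'' t\<bar> / \<bar>U t - c\<bar> * \<bar>\<phi> t\<bar>"
        using elim(2) abs_triangle_ineq4[of "\<alpha>^2 * \<phi> t" "(\<beta> - U'' t) / (U t - c) * \<phi> t"]
        by (simp add: abs_mult)
      also have "\<dots> \<le> \<alpha>^2 * \<bar>\<phi> t\<bar> * (r / D) + M / (m * D) * \<bar>\<phi> t\<bar>"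
      proof (intro add_mono mult_right_mono)
        show "\<alpha>^2 * \<bar>\<phi> t\<bar> \<le> \<alpha>^2 * \<bar>\<phi> t\<bar> * (r / D)"
          using D by (simp add: field_simps mult_right_mono)
        show "\<bar>\<beta> - U'' t\<bar> / \<bar>U t - c\<bar> \<le> M / (m * D)"
          using M[of t] m[of t] t D \<open>m > 0\<close> by (intro frac_le) (auto simp: D_def)
      qed simp
      also have "\<dots> = C * \<bar>\<phi> t\<bar> / \<bar>t - p\<bar>"
        using D \<open>m > 0\<close> by (simp add: C_def D_def field_simps)
      finally show "\<bar>\<phi>'' t\<bar> \<le> C * \<bar>\<phi> t\<bar> / \<bar>t - p\<bar>" .
    qed
  qed
  moreover have "C > 0" using \<open>m > 0\<close> \<open>M > 0\<close> \<open>r > 0\<close> by (simp add: C_def add_nonneg_pos)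
  ultimately show ?thesis using \<open>r > 0\<close> by blast
qed

lemma unique_continuation:
  assumes fin: "finite {y \<in> {y1..y2}. U y = c}" and simple: "\<forall>y\<in>{y1..y2}. U y = c \<longrightarrow> U' y \<noteq> 0"
    and p: "p \<in> {y1..y2}" "\<phi> p = 0" "\<phi>' p = 0"
  shows "\<forall>y\<in>{y1..y2}. \<phi> y = 0"
proof -
  define Z where "Z = {y \<in> {y1..y2}. \<phi> y = 0} \<inter> {y \<in> {y1..y2}. \<phi>' y = 0}"
  have "closedin (top_of_set {y1..y2}) Z"
    unfolding Z_def by (intro closedin_Int continuous_closedin_preimage_constant continuous_phi continuous_phi')
  moreover have "openin (top_of_set {y1..y2}) Z"
    unfolding openin_euclidean_subtopology_iff
  proof (intro conjI ballI)
    fix q assume "q \<in> Z"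
    then have q: "q \<in> {y1..y2}" "\<phi> q = 0" "\<phi>' q = 0" by (auto simp: Z_def)
    obtain C r where "C > 0" "r > 0" "AE t in lborel. t \<in> {y1..y2} \<and> \<bar>t - q\<bar> \<le> r \<and> t \<noteq> q \<longrightarrow>
        \<bar>\<phi>'' t\<bar> \<le> C * \<bar>\<phi> t\<bar> / \<bar>t - q\<bar>"
      using phi''_bound_near[OF fin q(1)] simple q(1) by blast
    then obtain e where "e > 0" "\<forall>x\<in>{y1..y2}. \<bar>x - q\<bar> < e \<longrightarrow> \<phi> x = 0 \<and> \<phi>' x = 0"
      using vanishes_near_double_zero[OF q] by blast
    then show "\<exists>e>0. \<forall>x\<in>{y1..y2}. dist x q < e \<longrightarrow> x \<in> Z"
      by (auto simp: Z_def dist_real_def)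
  qed (auto simp: Z_def)
  moreover have "Z \<noteq> {}" using p by (auto simp: Z_def)
  ultimately have "Z = {y1..y2}" using connected_Icc unfolding connected_clopen by blast
  then show ?thesis by (auto simp: Z_def)
qed

lemma phi'_deriv_off_level:
  assumes ab: "y1 \<le> a" "b \<le> y2" "y \<in> {a<..<b}" and off: "\<forall>t\<in>{a<..<b}. U t \<noteq> c"
  shows "(\<phi>' has_real_derivative \<alpha>^2 * \<phi> y - (\<beta> - U'' y) / (U y - c) * \<phi> y) (at y)"
proof -
  define h where "h t = \<alpha>^2 * \<phi> t - (\<beta> - U'' t) / (U t - c) * \<phi> t" for t
  define p where "p = (a + y) / 2"
  define q where "q = (y + b) / 2"
  have pq: "a < p" "p < y" "y < q" "q < b" using ab by (auto simp: p_def q_def)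
  have sub: "{p..q} \<subseteq> {a<..<b}" "{p..q} \<subseteq> {y1..y2}" using pq ab by auto
  have cont: "continuous_on {p..q} h"
    unfolding h_def using sub off continuous_on_subset[OF continuous_phi sub(2)]
      continuous_on_subset[OF continuous_U'' sub(2)] continuous_on_subset[OF continuous_U sub(2)]
    by (intro continuous_intros) auto
  have rep: "\<phi>' x = \<phi>' p + integral {p..x} h" if x: "x \<in> {p<..<q}" for x
  proof -
    have "AE t in lborel. t \<in> {p..x} \<longrightarrow> \<phi>'' t = h t"
      using phi''_eq by eventually_elim (use x pq ab(1,2) off in \<open>auto simp: h_def\<close>)
    then have "integral {p..x} \<phi>'' = integral {p..x} h" by (rule integral_eq_AE)
    then show ?thesis using phi'_diff[of p x] x sub(2) pq by auto
  qed
  have "((\<lambda>u. integral {p..u} h) has_vector_derivative h y) (at y within {p..q})"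
    using pq by (intro integral_has_vector_derivative cont) auto
  then have "((\<lambda>u. \<phi>' p + integral {p..u} h) has_real_derivative h y) (at y)"
    using pq by (auto simp: at_within_Icc_at has_real_derivative_iff_has_vector_derivative
        intro!: derivative_eq_intros)
  then have "(\<phi>' has_real_derivative h y) (at y)"
    by (rule has_field_derivative_transform_within_open[of _ _ _ "{p<..<q}"]) (use pq rep in auto)
  then show ?thesis by (simp add: h_def)
qed

text \<open>With \<open>\<psi> = \<phi> / (U - c)\<close> the flux is \<open>(U - c)\<^sup>2 \<psi> \<psi>'\<close>.\<close>

definition flux :: "real \<Rightarrow> real" where
  "flux t = \<phi> t * (\<phi>' t - U' t * \<phi> t / (U t - c))"

lemma flux_deriv:
  assumes ab: "y1 \<le> a" "b \<le> y2" "y \<in> {a<..<b}" and off: "\<forall>t\<in>{a<..<b}. U t \<noteq> c"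
  shows "(flux has_real_derivative
           (\<phi>' y - U' y * \<phi> y / (U y - c))^2 + \<alpha>^2 * (\<phi> y)^2 - \<beta> * (\<phi> y)^2 / (U y - c)) (at y)"
proof -
  have y: "y1 < y" "y < y2" and Uy: "U y - c \<noteq> 0" using ab off by auto
  have d1: "(\<phi> has_real_derivative \<phi>' y) (at y)"
    and d2: "(U has_real_derivative U' y) (at y)" and d3: "(U' has_real_derivative U'' y) (at y)"
    using phi_deriv[of y] U_deriv[of y] U'_deriv[of y] y by (auto simp: at_within_Icc_at)
  note d4 = phi'_deriv_off_level[OF ab off]
  have "(flux has_real_derivative
      \<phi>' y * (\<phi>' y - U' y * \<phi> y / (U y - c)) +
      \<phi> y * ((\<alpha>^2 * \<phi> y - (\<beta> - U'' y) / (U y - c) * \<phi> y) -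
        ((U'' y * \<phi> y + U' y * \<phi>' y) * (U y - c) - U' y * \<phi> y * U' y) / ((U y - c) * (U y - c)))) (at y)"
    unfolding flux_def by (rule derivative_eq_intros d1 d2 d3 d4 refl | use Uy in simp)+
  then show ?thesis by (simp only: flux_derivative_identity[OF Uy])
qed

lemma flux_tendsto_zero:
  assumes q: "q \<in> {y1..y2}" "\<phi> q = 0" and simple: "U q = c \<Longrightarrow> U' q \<noteq> 0"
  shows "(flux \<longlongrightarrow> 0) (at q within {y1..y2})"
proof -
  obtain m r where "m > 0" "r > 0"
    and m: "\<And>t. t \<in> {y1..y2} \<Longrightarrow> \<bar>t - q\<bar> \<le> r \<Longrightarrow> m * \<bar>t - q\<bar> \<le> \<bar>U t - c\<bar>"
    using level_distance_bound[OF q(1) simple] by blast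
  obtain B where B: "\<And>t. t \<in> {y1..y2} \<Longrightarrow> \<bar>\<phi>' t\<bar> \<le> B"
    using continuous_on_Icc_abs_bound[OF continuous_phi'] by blast
  obtain B' where B': "\<And>t. t \<in> {y1..y2} \<Longrightarrow> \<bar>U' t\<bar> \<le> B'"
    using continuous_on_Icc_abs_bound[OF continuous_U'] by blast
  define K where "K = B * B + B' * (B * B) / m"
  have "\<bar>flux t\<bar> \<le> K * \<bar>t - q\<bar>" if t: "t \<in> {y1..y2}" "t \<noteq> q" "\<bar>t - q\<bar> < r" for t
  proof -
    define e where "e = \<bar>t - q\<bar>"
    have "e > 0" using t by (simp add: e_def)
    have phi_t: "\<bar>\<phi> t\<bar> \<le> B * e"
      using phi_lipschitz[of y1 y2 B t q] B t q by (simp add: e_def)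
    have U_t: "m * e \<le> \<bar>U t - c\<bar>" using m[OF t(1)] t(3) by (simp add: e_def)
    have "\<bar>flux t\<bar> \<le> \<bar>\<phi> t\<bar> * \<bar>\<phi>' t\<bar> + \<bar>U' t\<bar> * (\<bar>\<phi> t\<bar> * \<bar>\<phi> t\<bar>) / \<bar>U t - c\<bar>"
      unfolding flux_def right_diff_distrib
      using abs_triangle_ineq4[of "\<phi> t * \<phi>' t" "\<phi> t * (U' t * \<phi> t / (U t - c))"]
      by (simp add: abs_mult abs_divide mult_ac)
    also have "\<dots> \<le> (B * e) * B + B' * ((B * e) * (B * e)) / (m * e)"
      using phi_t U_t B[OF t(1)] B'[OF t(1)] \<open>m > 0\<close> \<open>e > 0\<close>
      by (intro add_mono mult_mono frac_le) auto
    also have "\<dots> = K * e" using \<open>m > 0\<close> \<open>e > 0\<close> by (simp add: K_def field_simps)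
    finally show ?thesis by (simp add: e_def)
  qed
  then have "eventually (\<lambda>t. norm (flux t) \<le> K * \<bar>t - q\<bar>) (at q within {y1..y2})"
    unfolding eventually_at using \<open>r > 0\<close> by (auto simp: dist_real_def)
  moreover have "((\<lambda>t. K * \<bar>t - q\<bar>) \<longlongrightarrow> 0) (at q within {y1..y2})"
    by (auto intro!: tendsto_eq_intros)
  ultimately show ?thesis by (rule Lim_null_comparison)
qed

lemma energy_vanishing:
  assumes "\<alpha> \<noteq> 0" and ab: "y1 \<le> a" "a < b" "b \<le> y2"
    and off: "\<forall>t\<in>{a<..<b}. U t \<noteq> c" and sign: "\<forall>t\<in>{a<..<b}. \<beta> * (U t - c) \<le> 0"
    and ends: "\<phi> a = 0" "\<phi> b = 0" and simple: "U a = c \<Longrightarrow> U' a \<noteq> 0" "U b = c \<Longrightarrow> U' b \<noteq> 0"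
  shows "\<forall>t\<in>{a<..<b}. \<phi> t = 0"
proof
  fix t assume t: "t \<in> {a<..<b}"
  define G where "G t = (\<phi>' t - U' t * \<phi> t / (U t - c))^2 + \<alpha>^2 * (\<phi> t)^2 - \<beta> * (\<phi> t)^2 / (U t - c)" for t
  have G_ge: "\<alpha>^2 * (\<phi> s)^2 \<le> G s" if s: "s \<in> {a<..<b}" for s
  proof -
    have "\<beta> * (\<phi> s)^2 / (U s - c) \<le> 0"
      using sign s zero_le_power2[of "\<phi> s"] by (auto simp: divide_le_0_iff mult_le_0_iff)
    then show ?thesis unfolding G_def using zero_le_power2[of "\<phi>' s - U' s * \<phi> s / (U s - c)"] by linarith
  qed
  have "G t = 0"
  proof (rule nonneg_derivative_vanishes_between_zero_limits[OF _ _ _ _ t])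
    show "(flux has_real_derivative G s) (at s)" if "s \<in> {a<..<b}" for s
      unfolding G_def using flux_deriv[OF ab(1,3) that off] .
    show "0 \<le> G s" if "s \<in> {a<..<b}" for s
      by (rule order_trans[OF _ G_ge[OF that]]) simp
    show "(flux \<longlongrightarrow> 0) (at a within {a<..<b})" "(flux \<longlongrightarrow> 0) (at b within {a<..<b})"
      using ab by (intro tendsto_within_subset[OF flux_tendsto_zero] ends simple; auto)+
  qed
  then have "\<alpha>^2 * (\<phi> t)^2 \<le> 0" using G_ge[OF t] by simp
  then show "\<phi> t = 0" using \<open>\<alpha> \<noteq> 0\<close> by (simp add: mult_le_0_iff)
qed

lemma reciprocal_coefficient_limit:
  assumes z: "z \<in> {y1..y2}" "U z = c" and "U' z \<noteq> 0"
  shows "((\<lambda>t. (\<beta> - U'' t) * \<phi> t / ((U t - c) / (t - z))) \<longlongrightarrow> (\<beta> - U'' z) * \<phi> z / U' z)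
           (at z within {y1..y2})"
proof -
  have "((\<lambda>t. (U t - c) / (t - z)) \<longlongrightarrow> U' z) (at z within {y1..y2})"
    using U_deriv[OF z(1)] z(2) by (simp add: has_field_derivative_iff)
  moreover have "(U'' \<longlongrightarrow> U'' z) (at z within {y1..y2})" "(\<phi> \<longlongrightarrow> \<phi> z) (at z within {y1..y2})"
    using continuous_U'' continuous_phi z(1) unfolding continuous_on_def by blast+
  ultimately show ?thesis using \<open>U' z \<noteq> 0\<close> by (intro tendsto_intros)
qed

lemma phi_zero_on_level:
  assumes z: "y1 < z" "z < y2" "U z = c" and "U' z \<noteq> 0" and "\<beta> \<noteq> U'' z"
  shows "\<phi> z = 0"
proof (rule ccontr)
  assume "\<phi> z \<noteq> 0"
  define L where "L = (\<beta> - U'' z) * \<phi> z / U' z"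
  have "L \<noteq> 0" using assms \<open>\<phi> z \<noteq> 0\<close> by (simp add: L_def)
  define g where "g t = (\<beta> - U'' t) * \<phi> t / ((U t - c) / (t - z))" for t
  have "eventually (\<lambda>t. dist (g t) L < \<bar>L\<bar> / 2) (at z within {y1..y2})"
    using reciprocal_coefficient_limit[of z] z \<open>U' z \<noteq> 0\<close> \<open>L \<noteq> 0\<close>
    unfolding g_def[abs_def] L_def by (intro tendsto_iff[THEN iffD1, rule_format]) auto
  then obtain d where "d > 0"
    and d: "\<And>t. t \<in> {y1..y2} \<Longrightarrow> t \<noteq> z \<Longrightarrow> dist t z < d \<Longrightarrow> \<bar>g t - L\<bar> < \<bar>L\<bar> / 2"
    unfolding eventually_at dist_real_def by blast
  define w where "w = min (z + d / 2) ((z + y2) / 2)"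
  have w: "z < w" "w < y2" "w - z < d" using z \<open>d > 0\<close> by (auto simp: w_def min_def)
  obtain B where B: "\<And>t. t \<in> {y1..y2} \<Longrightarrow> \<bar>\<phi> t\<bar> \<le> B"
    using continuous_on_Icc_abs_bound[OF continuous_phi] by blast
  have "AE t in lborel. t \<in> {z<..w} \<longrightarrow> sgn L * \<phi>'' t \<le> \<alpha>^2 * B - (\<bar>L\<bar> / 2) / (t - z)"
    using phi''_eq
  proof eventually_elim
    case (elim t)
    show ?case
    proof
      assume t: "t \<in> {z<..w}"
      then have tI: "t \<in> {y1..y2}" "t \<in> {y1<..<y2}" using z w by auto
      have "\<bar>g t - L\<bar> < \<bar>L\<bar> / 2" using d[OF tI(1)] t w by (simp add: dist_real_def)
      then have sg: "\<bar>L\<bar> / 2 \<le> sgn L * g t" using \<open>L \<noteq> 0\<close> by (auto simp: sgn_if abs_if split: if_splits)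
      then have "U t \<noteq> c" using \<open>L \<noteq> 0\<close> by (auto simp: g_def)
      then have "g t / (t - z) = (\<beta> - U'' t) / (U t - c) * \<phi> t" using t by (simp add: g_def)
      then have "sgn L * \<phi>'' t = sgn L * (\<alpha>^2 * \<phi> t) - sgn L * (g t / (t - z))"
        using elim tI(2) \<open>U t \<noteq> c\<close> by (simp add: right_diff_distrib)
      moreover have "(\<bar>L\<bar> / 2) / (t - z) \<le> sgn L * (g t / (t - z))"
        using divide_right_mono[OF sg, of "t - z"] t by simp
      moreover have "sgn L * \<phi> t \<le> B" using B[OF tI(1)] by (auto simp: sgn_if abs_le_iff)
      then have "sgn L * (\<alpha>^2 * \<phi> t) \<le> \<alpha>^2 * B"
        using mult_left_mono[of "sgn L * \<phi> t" B "\<alpha>^2"] by (simp add: mult_ac)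
      ultimately show "sgn L * \<phi>'' t \<le> \<alpha>^2 * B - (\<bar>L\<bar> / 2) / (t - z)" by linarith
    qed
  qed
  then show False
    using no_reciprocal_singularity[of z w "\<bar>L\<bar> / 2"] z w \<open>L \<noteq> 0\<close> by auto
qed

lemma double_zero_exists:
  assumes "\<alpha> \<noteq> 0" "y1 < y2" and fin: "finite {y \<in> {y1..y2}. U y = c}"
    and simple: "\<forall>y\<in>{y1..y2}. U y = c \<longrightarrow> U' y \<noteq> 0"
    and nonres: "\<forall>y\<in>{y1..y2}. U y = c \<longrightarrow> \<beta> \<noteq> U'' y"
    and ends: "U y1 \<noteq> c" "U y2 \<noteq> c" and bc: "\<phi> y1 = 0" "\<phi> y2 = 0"
    and t: "t \<in> {y1..y2}" "U t \<noteq> c" "\<beta> * (U t - c) \<le> 0"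
  shows "\<exists>m\<in>{y1..y2}. \<phi> m = 0 \<and> \<phi>' m = 0"
proof -
  obtain a b where ab: "y1 \<le> a" "a < b" "b \<le> y2" and a: "a = y1 \<or> U a = c" and b: "b = y2 \<or> U b = c"
    and same_sign: "\<forall>s\<in>{a<..<b}. 0 < (U s - c) * (U t - c)"
    using level_set_gap[OF \<open>y1 < y2\<close> continuous_U fin t(1,2)] by blast
  have zero_at_level: "\<phi> y = 0" if "y \<in> {y1..y2}" "U y = c" for y
    using phi_zero_on_level[of y] that ends simple nonres by (force simp: le_less)
  have "\<phi> a = 0" "\<phi> b = 0" using a b ab bc zero_at_level by auto
  moreover have "\<forall>s\<in>{a<..<b}. U s \<noteq> c \<and> \<beta> * (U s - c) \<le> 0"
    using same_sign t(3) by (auto simp: zero_less_mult_iff mult_le_0_iff)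
  ultimately have "\<forall>s\<in>{a<..<b}. \<phi> s = 0"
    using energy_vanishing[OF \<open>\<alpha> \<noteq> 0\<close> ab] simple ab by auto
  moreover have "(a + b) / 2 \<in> {a<..<b}" using ab by simp
  ultimately show ?thesis
    using phi'_zero_where_phi_vanishes[OF ab(1,3)] ab by (intro bexI[of _ "(a + b) / 2"]) auto
qed

end

theorem theorem2p1:
  fixes U U' U'' \<phi> \<phi>' \<phi>'' :: "real \<Rightarrow> real"
    and y1 y2 c \<alpha> \<beta> :: real
  assumes y12: "y1 < y2"
    and U_C2: "C2_on y1 y2 U U' U''"
    and finite_levels: "\<forall>d. Inf (U ` {y1..y2}) < d \<and> d < Sup (U ` {y1..y2})
                             \<longrightarrow> finite {y \<in> {y1..y2}. U y = d}"
    and alpha_pos: "\<alpha> > 0"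
    and phi_H2: "H2_on y1 y2 \<phi> \<phi>' \<phi>''"
    and phi_nontrivial: "\<exists>y\<in>{y1..y2}. \<phi> y \<noteq> 0"
    and phi_eq: "AE y in lborel. y \<in> {y1<..<y2} \<and> U y \<noteq> c \<longrightarrow>
                   - \<phi>'' y + \<alpha>^2 * \<phi> y - (\<beta> - U'' y) / (U y - c) * \<phi> y = 0"
    and bc: "\<phi> y1 = 0" "\<phi> y2 = 0"
  shows "(\<exists>z\<in>{y1..y2}. c = U z \<and> \<beta> = U'' z)
         \<or> c = U y1 \<or> c = U y2
         \<or> critical_value_on y1 y2 U' U c
         \<or> c \<notin> U ` {y1..y2}"
proof (rule ccontr)
  assume "\<not> ?thesis"
  then have range: "c \<in> U ` {y1..y2}" and ends: "U y1 \<noteq> c" "U y2 \<noteq> c"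
    and simple: "\<forall>y\<in>{y1..y2}. U y = c \<longrightarrow> U' y \<noteq> 0"
    and nonres: "\<forall>y\<in>{y1..y2}. U y = c \<longrightarrow> \<beta> \<noteq> U'' y"
    by (auto simp: critical_value_on_def)
  interpret neutral_mode y1 y2 \<phi> \<phi>' \<phi>'' U U' U'' c \<alpha> \<beta>
    using phi_H2 U_C2 phi_eq by unfold_locales
  obtain z where z: "y1 < z" "z < y2" "U z = c" using range ends by (force simp: le_less)
  have "(U has_real_derivative U' z) (at z)" "U' z \<noteq> 0"
    using U_deriv[of z] simple z by (auto simp: at_within_Icc_at)
  then obtain t0 t1 where t0: "t0 \<in> {y1..y2}" "U t0 < c" and t1: "t1 \<in> {y1..y2}" "c < U t1"
    using crossing_at_interior_simple_zero[OF _ _ z(1,2)] z(3) by blast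
  then have fin: "finite {y \<in> {y1..y2}. U y = c}"
    using finite_levels Inf_less_less_Sup_image[OF continuous_U] by blast
  obtain t where "t \<in> {y1..y2}" "U t \<noteq> c" "\<beta> * (U t - c) \<le> 0"
  proof (cases "\<beta> \<ge> 0")
    case True
    then show ?thesis using that[of t0] t0 by (simp add: mult_nonneg_nonpos)
  next
    case False
    then show ?thesis using that[of t1] t1 by (simp add: mult_nonpos_nonneg)
  qed
  then obtain m where "m \<in> {y1..y2}" "\<phi> m = 0" "\<phi>' m = 0"
    using double_zero_exists[of t] alpha_pos y12 fin simple nonres ends bc by auto
  then have "\<forall>y\<in>{y1..y2}. \<phi> y = 0" using unique_continuation fin simple by blast
  then show False using phi_nontrivial by blast
qed

end
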